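(* Let $L$ be an $r\times m$ matrix of integers of full rank $r$, and let $x_1,\ldots,x_M\in[0,1)^m$ be points such that the real linear map $L$ restricts to a bijection $\{x_i:i\in\{1,\ldots,M\}\}\to L([0,1)^m)\cap\mathbb{Z}^r$. For a Borel set $A\subset\ker_{\mathbb{T}}L$ and $i\in\{1,\ldots,M\}$, let $A^{(i)}=A\cap(x_i+\ker_{\mathbb{R}}L)$ (with $A$ viewed as a subset of $[0,1)^m$ and addition in $\mathbb{R}^m$). Then there is a constant $c_L>0$ such that for every Borel set $A\subset\ker_{\mathbb{T}}L$, \[\mu_{L,\mathbb{T}}(A)=c_L\sum_{i=1}^{M}\mu_{L,\mathbb{R}}\big(A^{(i)}-x_i\big),\] where $A^{(i)}-x_i$ is computed in $\mathbb{R}^m$.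
   Context: $\mathbb{T}^m$ is identified with $[0,1)^m\subset\mathbb{R}^m$ with coordinatewise addition mod 1, so $\ker_{\mathbb{T}}L=\{x\in[0,1)^m:Lx\in\mathbb{Z}^r\}$; $\mu_{L,\mathbb{T}}$ is the normalized Haar probability measure on this closed subgroup of $\mathbb{T}^m$. $\ker_{\mathbb{R}}L=\{x\in\mathbb{R}^m:Lx=0\}$, an $(m-r)$-dimensional subspace, and $\mu_{L,\mathbb{R}}$ denotes the $(m-r)$-dimensional Lebesgue measure on it. *)

theory Defs
  imports "HOL-Analysis.Analysis" "HOL-Probability.Probability"
begin

text \<open>The unit cube [0,1)^m, identified with the torus T^m.\<close>
definition unit_cube :: "(real^'m) set" where
  "unit_cube = {x. \<forall>j. 0 \<le> x$j \<and> x$j < 1}"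

definition int_vecs :: "(real^'r) set" where
  "int_vecs = {y. \<forall>i. y$i \<in> \<int>}"

definition torus_add :: "real^'m \<Rightarrow> real^'m \<Rightarrow> real^'m" where
  "torus_add g x = (\<chi> j. frac (g$j + x$j))"

definition kerT :: "real^'m^'r \<Rightarrow> (real^'m) set" where
  "kerT L = {x \<in> unit_cube. L *v x \<in> int_vecs}"

definition kerR :: "real^'m^'r \<Rightarrow> (real^'m) set" where
  "kerR L = {x. L *v x = 0}"

text \<open>mu_{L,T}: normalized Haar probability measure on the closed subgroup ker_T L of T^m,
  i.e. a Borel probability measure on ker_T L invariant under the group translations.\<close>
definition haar_kerT :: "real^'m^'r \<Rightarrow> (real^'m) measure \<Rightarrow> bool" where
  "haar_kerT L \<mu> \<longleftrightarrow>
     sets \<mu> = sets (restrict_space borel (kerT L)) \<and>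
     space \<mu> = kerT L \<and>
     prob_space \<mu> \<and>
     (\<forall>g\<in>kerT L. \<forall>B\<in>sets \<mu>. emeasure \<mu> (torus_add g ` B) = emeasure \<mu> B)"

definition onb_list :: "(real^'m) set \<Rightarrow> (real^'m) list" where
  "onb_list V = (SOME bs. length bs = dim V \<and> set bs \<subseteq> V \<and> span (set bs) = V \<and>
      (\<forall>i<length bs. \<forall>j<length bs. bs!i \<bullet> bs!j = (if i = j then 1 else 0)))"

text \<open>(dim V)-dimensional Lebesgue measure on a linear subspace V of R^m: the image of
  Lebesgue measure on R^(dim V) under the isometry given by an orthonormal basis of V.\<close>
definition subspace_lebesgue :: "(real^'m) set \<Rightarrow> (real^'m) measure" where
  "subspace_lebesgue V =
     distr (Pi\<^sub>M {..<dim V} (\<lambda>_. lborel)) borel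
       (\<lambda>t. \<Sum>i<dim V. t i *\<^sub>R (onb_list V ! i))"

end

theory Submission
  imports Defs
begin

text \<open>
  Let K = ker_R L and let \<lambda> be Lebesgue measure on K. As L has full rank, every k \<in> \<int>^r has a
  preimage p_k, and for A \<subseteq> ker_T L put \<Lambda>_k(A) = \<lambda>{v \<in> K. p_k + v \<in> A}, which does not depend on
  the choice of p_k since \<lambda> is translation invariant along K, and N(A) = \<Sum>_{k \<in> \<int>^r} \<Lambda>_k(A). The i-th
  summand of the claimed formula is \<Lambda>_{L x_i}(A), and only k \<in> L([0,1)^m) contribute, so the
  right-hand side is c N(A). Because the integer translates of [0,1)^m tile \<real>^m, exchanging the
  sums over \<int>^r and \<int>^m shows that N is invariant under the torus translations by elements of
  ker_T L. Averaging over the Haar probability measure \<mu> and applying Fubini gives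
  N(A) = \<mu>(A) N([0,1)^m), and 0 < N([0,1)^m) < \<infinity>.
\<close>

section \<open>Orthonormal coordinates on a subspace\<close>

lemma onb_list_spec:
  fixes V :: "(real^'m) set"
  assumes "subspace V"
  shows "length (onb_list V) = dim V \<and> set (onb_list V) \<subseteq> V \<and> span (set (onb_list V)) = V \<and>
      (\<forall>i<length (onb_list V). \<forall>j<length (onb_list V).
         onb_list V!i \<bullet> onb_list V!j = (if i = j then 1 else 0))"
proof -
  obtain B where B: "B \<subseteq> V" "pairwise orthogonal B" "\<And>x. x \<in> B \<Longrightarrow> norm x = 1"
              "independent B" "card B = dim V" "span B = V"
    using orthonormal_basis_subspace[OF assms] by metis
  have "finite B" using B(4) independent_imp_finite by blast
  then obtain bs where bs: "set bs = B" "distinct bs" using finite_distinct_list by blast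
  have "length bs = dim V" using B(5) bs distinct_card by metis
  moreover have "bs!i \<bullet> bs!j = (if i = j then 1 else 0)" if ij: "i < length bs" "j < length bs" for i j
  proof (cases "i = j")
    case True
    have "norm (bs!i) = 1" using B(3) bs(1) ij(1) nth_mem by blast
    then show ?thesis using True by (simp add: norm_eq_1)
  next
    case False
    have "bs!i \<in> B" "bs!j \<in> B" using bs(1) ij nth_mem by blast+
    moreover have "bs!i \<noteq> bs!j" using bs(2) ij False nth_eq_iff_index_eq by metis
    ultimately have "orthogonal (bs!i) (bs!j)" using B(2) unfolding pairwise_def by blast
    then show ?thesis using False by (simp add: orthogonal_def)
  qed
  ultimately have "\<exists>bs. length bs = dim V \<and> set bs \<subseteq> V \<and> span (set bs) = V \<and>
      (\<forall>i<length bs. \<forall>j<length bs. bs!i \<bullet> bs!j = (if i = j then 1 else 0))"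
    using B bs by blast
  then show ?thesis unfolding onb_list_def by (rule someI_ex)
qed

definition onb_param_space :: "(real^'m) set \<Rightarrow> (nat \<Rightarrow> real) measure" where
  "onb_param_space V = Pi\<^sub>M {..<dim V} (\<lambda>_. lborel)"

definition onb_param :: "(real^'m) set \<Rightarrow> (nat \<Rightarrow> real) \<Rightarrow> real^'m" where
  "onb_param V t = (\<Sum>i<dim V. t i *\<^sub>R onb_list V ! i)"

lemma subspace_lebesgue_eq_distr_onb_param:
  "subspace_lebesgue V = distr (onb_param_space V) borel (onb_param V)"
  unfolding subspace_lebesgue_def onb_param_space_def onb_param_def ..

lemma sigma_finite_onb_param_space: "sigma_finite_measure (onb_param_space V)"
proof -
  interpret product_sigma_finite "\<lambda>_::nat. lborel :: real measure" by unfold_locales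
  show ?thesis unfolding onb_param_space_def by (rule sigma_finite) simp
qed

lemma onb_param_measurable[measurable]: "onb_param V \<in> borel_measurable (onb_param_space V)"
  unfolding onb_param_def onb_param_space_def
  by (intro borel_measurable_sum borel_measurable_scaleR borel_measurable_const)
     (auto intro: measurable_component_singleton)

context
  fixes V :: "(real^'m) set"
  assumes V: "subspace V"
begin

lemma onb_list_length: "length (onb_list V) = dim V"
  using onb_list_spec[OF V] by blast

lemma span_onb_list: "span (set (onb_list V)) = V"
  using onb_list_spec[OF V] by blast

lemma onb_list_nth_in: "i < dim V \<Longrightarrow> onb_list V ! i \<in> V"
  using onb_list_spec[OF V] nth_mem by (metis subsetD)

lemma onb_list_orthonormal:
  "i < dim V \<Longrightarrow> j < dim V \<Longrightarrow> onb_list V ! i \<bullet> onb_list V ! j = (if i = j then 1 else 0)"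
  using onb_list_spec[OF V] by auto

lemma onb_param_in: "onb_param V t \<in> V"
  unfolding onb_param_def
  by (intro subspace_sum[OF V] subspace_scale[OF V] onb_list_nth_in) simp

lemma inner_onb_param:
  assumes "j < dim V"
  shows "onb_param V t \<bullet> onb_list V ! j = t j"
proof -
  have "onb_param V t \<bullet> onb_list V ! j = (\<Sum>i<dim V. if i = j then t i else 0)"
    unfolding onb_param_def inner_sum_left
    by (intro sum.cong refl) (simp add: onb_list_orthonormal assms)
  then show ?thesis using assms by simp
qed

lemma onb_param_coordinates:
  assumes u: "u \<in> V"
  shows "onb_param V (\<lambda>i. u \<bullet> onb_list V ! i) = u"
proof -
  define v where "v = u - onb_param V (\<lambda>i. u \<bullet> onb_list V ! i)"
  have "v \<in> V" unfolding v_def by (rule subspace_diff[OF V u onb_param_in])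
  then have v_span: "v \<in> span (set (onb_list V))" by (simp only: span_onb_list)
  have "orthogonal v b" if b: "b \<in> set (onb_list V)" for b
  proof -
    obtain j where j: "j < dim V" "b = onb_list V ! j"
      using b by (metis in_set_conv_nth onb_list_length)
    have "v \<bullet> b = u \<bullet> b - onb_param V (\<lambda>i. u \<bullet> onb_list V ! i) \<bullet> onb_list V ! j"
      unfolding v_def inner_diff_left j(2) ..
    also have "\<dots> = 0" by (simp only: inner_onb_param[OF j(1)] j(2) diff_self)
    finally show ?thesis unfolding orthogonal_def .
  qed
  then have "orthogonal v v" using orthogonal_to_span[OF v_span] by blast
  then have "v = 0" by (simp add: orthogonal_def)
  then show ?thesis unfolding v_def by simp
qed

lemma abs_le_norm_onb_param:
  assumes "j < dim V"
  shows "\<bar>t j\<bar> \<le> norm (onb_param V t)"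
proof -
  have "\<bar>t j\<bar> = \<bar>onb_param V t \<bullet> onb_list V ! j\<bar>" using inner_onb_param[OF assms] by simp
  also have "\<dots> \<le> norm (onb_param V t) * norm (onb_list V ! j)" by (rule Cauchy_Schwarz_ineq2)
  also have "norm (onb_list V ! j) = 1" using onb_list_orthonormal[OF assms assms] by (simp add: norm_eq_1)
  finally show ?thesis by simp
qed

end

lemma onb_param_add: "onb_param V (\<lambda>i. t i + c i) = onb_param V t + onb_param V c"
  unfolding onb_param_def by (simp add: scaleR_add_left sum.distrib)

lemma onb_param_restrict: "onb_param V (restrict t {..<dim V}) = onb_param V t"
  unfolding onb_param_def by (intro sum.cong refl) simp

lemma distr_PiM_lborel_translate:
  fixes I :: "'i set" and c :: "'i \<Rightarrow> real"
  assumes I: "finite I"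
  shows "distr (Pi\<^sub>M I (\<lambda>_. lborel)) (Pi\<^sub>M I (\<lambda>_. lborel)) (\<lambda>t. restrict (\<lambda>i. t i + c i) I)
    = Pi\<^sub>M I (\<lambda>_. lborel)"
proof -
  interpret product_sigma_finite "\<lambda>_::'i. lborel :: real measure" by unfold_locales
  have shift: "(\<lambda>t. restrict (\<lambda>i. t i + c i) I) \<in> Pi\<^sub>M I (\<lambda>_. lborel) \<rightarrow>\<^sub>M Pi\<^sub>M I (\<lambda>_. lborel)"
    by (intro measurable_restrict) (auto intro: measurable_component_singleton)
  show ?thesis
  proof (rule PiM_eqI[OF I])
    fix A :: "'i \<Rightarrow> real set" assume A: "\<And>i. i \<in> I \<Longrightarrow> A i \<in> sets lborel"
    have pre: "(\<lambda>t. restrict (\<lambda>i. t i + c i) I) -` Pi\<^sub>E I A \<inter> space (Pi\<^sub>M I (\<lambda>_. lborel))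
       = Pi\<^sub>E I (\<lambda>i. (+) (c i) -` A i)"
      by (auto simp: space_PiM PiE_iff extensional_def add.commute)
    have pre_sets: "(+) (c i) -` A i \<in> sets lborel" if "i \<in> I" for i
      unfolding sets_lborel by (rule measurable_sets_borel[OF _ A[OF that, unfolded sets_lborel]]) measurable
    have pre_emeasure: "emeasure lborel ((+) (c i) -` A i) = emeasure lborel (A i)" if "i \<in> I" for i
    proof -
      have "emeasure lborel ((+) (c i) -` A i) = emeasure (distr lborel borel ((+) (c i))) (A i)"
        using A[OF that] by (subst emeasure_distr) auto
      then show ?thesis by (simp add: lborel_distr_plus)
    qed
    have "Pi\<^sub>E I A \<in> sets (Pi\<^sub>M I (\<lambda>_. lborel))"
      using A by (intro sets_PiM_I_finite I) auto
    then have "emeasure (distr (Pi\<^sub>M I (\<lambda>_. lborel)) (Pi\<^sub>M I (\<lambda>_. lborel))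
          (\<lambda>t. restrict (\<lambda>i. t i + c i) I)) (Pi\<^sub>E I A)
        = emeasure (Pi\<^sub>M I (\<lambda>_. lborel)) (Pi\<^sub>E I (\<lambda>i. (+) (c i) -` A i))"
      using shift by (subst emeasure_distr) (simp_all only: pre)
    also have "\<dots> = (\<Prod>i\<in>I. emeasure lborel ((+) (c i) -` A i))"
      using pre_sets I by (subst emeasure_PiM) auto
    also have "\<dots> = (\<Prod>i\<in>I. emeasure lborel (A i))"
      using pre_emeasure by (intro prod.cong) auto
    finally show "emeasure (distr (Pi\<^sub>M I (\<lambda>_. lborel)) (Pi\<^sub>M I (\<lambda>_. lborel))
        (\<lambda>t. restrict (\<lambda>i. t i + c i) I)) (Pi\<^sub>E I A) = (\<Prod>i\<in>I. emeasure lborel (A i))" .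
  qed simp_all
qed

lemma nn_integral_onb_param_translate:
  assumes V: "subspace V" and f[measurable]: "f \<in> borel_measurable borel" and u: "u \<in> V"
  shows "(\<integral>\<^sup>+t. f (onb_param V t + u) \<partial>onb_param_space V) = (\<integral>\<^sup>+t. f (onb_param V t) \<partial>onb_param_space V)"
proof -
  define shift where "shift t = restrict (\<lambda>i. t i + u \<bullet> onb_list V ! i) {..<dim V}" for t
  have shift_measurable: "shift \<in> onb_param_space V \<rightarrow>\<^sub>M onb_param_space V"
    unfolding onb_param_space_def shift_def
    by (intro measurable_restrict) (auto intro: measurable_component_singleton)
  have shift_eq: "onb_param V t + u = onb_param V (shift t)" for t
    unfolding shift_def onb_param_restrict onb_param_add onb_param_coordinates[OF V u] ..
  have "(\<integral>\<^sup>+t. f (onb_param V t + u) \<partial>onb_param_space V)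
      = (\<integral>\<^sup>+t. f (onb_param V (shift t)) \<partial>onb_param_space V)"
    by (intro nn_integral_cong arg_cong[where f=f] shift_eq)
  also have "\<dots> = (\<integral>\<^sup>+t. f (onb_param V t) \<partial>distr (onb_param_space V) (onb_param_space V) shift)"
    by (rule nn_integral_distr[symmetric, OF shift_measurable]) measurable
  also have "distr (onb_param_space V) (onb_param_space V) shift = onb_param_space V"
    unfolding shift_def onb_param_space_def by (rule distr_PiM_lborel_translate) simp
  finally show ?thesis .
qed

lemma emeasure_onb_param_space_nonzero: "emeasure (onb_param_space V) (space (onb_param_space V)) \<noteq> 0"
proof -
  interpret product_sigma_finite "\<lambda>_::nat. lborel :: real measure" by unfold_locales
  have "space (onb_param_space V) = Pi\<^sub>E {..<dim V} (\<lambda>_. UNIV)"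
    unfolding onb_param_space_def by (simp add: space_PiM)
  moreover have "emeasure (onb_param_space V) (Pi\<^sub>E {..<dim V} (\<lambda>_. UNIV)) = \<infinity> ^ dim V"
    unfolding onb_param_space_def by (subst emeasure_PiM) auto
  ultimately show ?thesis by (simp add: top_power_ennreal)
qed

section \<open>Integer vectors and the torus\<close>

lemma borel_measurable_vec_lambda:
  assumes "\<And>j. (\<lambda>x. f x j) \<in> borel_measurable M"
  shows "(\<lambda>x. (\<chi> j. f x j) :: real^'n) \<in> borel_measurable M"
proof (rule borel_measurable_euclidean_space[THEN iffD2], intro ballI)
  fix b :: "real^'n" assume "b \<in> Basis"
  then obtain k where "b = axis k 1" unfolding Basis_vec_def by auto
  then show "(\<lambda>x. (\<chi> j. f x j) \<bullet> b) \<in> borel_measurable M"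
    using assms by (simp add: inner_axis)
qed

lemma matrix_vector_mult_measurable[measurable]:
  "(\<lambda>x. L *v x) \<in> borel_measurable (borel :: (real^'m) measure)" for L :: "real^'m^'r"
  unfolding matrix_vector_mult_def by (intro borel_measurable_vec_lambda) measurable

lemma unit_cube_borel[measurable]: "unit_cube \<in> sets (borel :: (real^'m) measure)"
proof -
  have cube_eq: "unit_cube = (\<Inter>j. {x::real^'m. 0 \<le> x$j} \<inter> {x. x$j < 1})"
    by (auto simp: unit_cube_def)
  have "{x::real^'m. 0 \<le> x$j} \<inter> {x. x$j < 1} \<in> sets borel" for j
    by (intro sets.Int borel_closed borel_open closed_Collect_le open_Collect_less continuous_intros)
  then show ?thesis unfolding cube_eq by (intro sets.finite_INT) auto
qed

lemma countable_int_vecs: "countable (int_vecs :: (real^'r) set)"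
proof -
  have "int_vecs = (\<lambda>f. \<chi> i. f i) ` (Pi\<^sub>E UNIV (\<lambda>_::'r. \<int>))"
  proof safe
    fix y :: "real^'r" assume "y \<in> int_vecs"
    then have "(\<lambda>i. y$i) \<in> Pi\<^sub>E UNIV (\<lambda>_. \<int>)" by (auto simp: int_vecs_def)
    then show "y \<in> (\<lambda>f. \<chi> i. f i) ` (Pi\<^sub>E UNIV (\<lambda>_::'r. \<int>))"
      by (metis image_eqI vec_nth_inverse)
  qed (auto simp: int_vecs_def PiE_iff)
  moreover have "countable (Pi\<^sub>E (UNIV::'r set) (\<lambda>_. \<int>::real set))"
    by (intro countable_PiE) (auto simp: Ints_def)
  ultimately show ?thesis by (metis countable_image)
qed

lemma int_vecs_add: "a \<in> int_vecs \<Longrightarrow> b \<in> int_vecs \<Longrightarrow> a + b \<in> int_vecs"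
  and int_vecs_diff: "a \<in> int_vecs \<Longrightarrow> b \<in> int_vecs \<Longrightarrow> a - b \<in> int_vecs"
  and int_vecs_uminus: "a \<in> int_vecs \<Longrightarrow> - a \<in> int_vecs"
  by (auto simp: int_vecs_def)

lemma integer_matrix_vector_mult_int_vecs:
  fixes L :: "real^'m^'r"
  assumes "\<forall>i j. L$i$j \<in> \<int>" "n \<in> int_vecs"
  shows "L *v n \<in> int_vecs"
  using assms unfolding int_vecs_def matrix_vector_mult_def by (simp add: Ints_sum Ints_mult)

lemma bij_betw_add_int_vecs:
  assumes "c \<in> int_vecs"
  shows "bij_betw (\<lambda>k. k + c) int_vecs int_vecs"
  by (rule bij_betwI[where g="\<lambda>k. k - c"]) (use assms int_vecs_add int_vecs_diff in auto)

definition floor_vec :: "real^'m \<Rightarrow> real^'m" where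
  "floor_vec w = (\<chi> j. of_int \<lfloor>w$j\<rfloor>)"

lemma floor_vec_in_int_vecs: "floor_vec w \<in> int_vecs"
  by (auto simp: floor_vec_def int_vecs_def)

lemma floor_vec_measurable[measurable (raw)]:
  assumes "f \<in> borel_measurable M"
  shows "(\<lambda>x. floor_vec (f x :: real^'m)) \<in> borel_measurable M"
proof -
  have "floor_vec \<in> borel_measurable (borel :: (real^'m) measure)"
    unfolding floor_vec_def
    by (rule borel_measurable_vec_lambda, rule measurable_compose[OF borel_measurable_nth borel_measurable_real_floor])
  with assms show ?thesis by (rule measurable_compose)
qed

lemma diff_in_unit_cube_iff:
  assumes "n \<in> int_vecs"
  shows "w - n \<in> unit_cube \<longleftrightarrow> n = floor_vec w"
proof
  assume cube: "w - n \<in> unit_cube"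
  show "n = floor_vec w"
  proof (rule vec_eq_iff[THEN iffD2], rule allI)
    fix j
    obtain z where z: "n$j = of_int z" using assms by (auto simp: int_vecs_def elim!: Ints_cases)
    have "0 \<le> w$j - n$j" "w$j - n$j < 1" using cube by (auto simp: unit_cube_def)
    then have "\<lfloor>w$j\<rfloor> = z" using z by linarith
    then show "n$j = floor_vec w $ j" using z by (simp add: floor_vec_def)
  qed
next
  assume "n = floor_vec w"
  moreover have "(w - floor_vec w)$j = frac (w$j)" for j
    by (simp add: floor_vec_def frac_def)
  ultimately show "w - n \<in> unit_cube"
    by (simp add: unit_cube_def frac_ge_0 frac_lt_1)
qed

lemma torus_add_eq: "torus_add x y = x + y - floor_vec (x + y)"
  unfolding vec_eq_iff torus_add_def floor_vec_def by (simp add: frac_def)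

lemma torus_add_measurable[measurable (raw)]:
  assumes "f \<in> borel_measurable M" "g \<in> borel_measurable M"
  shows "(\<lambda>x. torus_add (f x) (g x :: real^'m)) \<in> borel_measurable M"
proof -
  have sum: "(\<lambda>x. f x + g x) \<in> borel_measurable M" using assms by (rule borel_measurable_add)
  show ?thesis
    unfolding torus_add_eq using sum floor_vec_measurable[OF sum] by (rule borel_measurable_diff)
qed

lemma torus_add_commute: "torus_add x y = torus_add y x"
  unfolding torus_add_def by (simp add: add.commute)

lemma nn_integral_unit_cube_translates:
  "(\<integral>\<^sup>+n. indicator unit_cube (w + n) \<partial>count_space int_vecs) = (1::ennreal)"
proof -
  have "(\<integral>\<^sup>+n. indicator unit_cube (w + n) \<partial>count_space int_vecs)
      = (\<Sum>n\<in>{- floor_vec w}. indicator unit_cube (w + n) :: ennreal)"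
  proof (rule nn_integral_count_space')
    fix n assume n: "n \<in> int_vecs" "n \<notin> {- floor_vec w}"
    then have "- n \<noteq> floor_vec w" by (metis minus_minus singletonI)
    then have "w - (- n) \<notin> unit_cube"
      using diff_in_unit_cube_iff[OF int_vecs_uminus[OF n(1)]] by blast
    then show "indicator unit_cube (w + n) = (0::ennreal)" by simp
  qed (auto simp: floor_vec_in_int_vecs int_vecs_uminus)
  also have "\<dots> = 1"
    using diff_in_unit_cube_iff[OF floor_vec_in_int_vecs, of w] by simp
  finally show ?thesis .
qed

lemma indicator_torus_add_eq_nn_integral:
  assumes "A \<subseteq> unit_cube"
  shows "indicator A (torus_add x y) = (\<integral>\<^sup>+n. indicator A (x + y - n) \<partial>count_space int_vecs :: ennreal)"
proof -
  have "(\<integral>\<^sup>+n. indicator A (x + y - n) \<partial>count_space int_vecs)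
      = (\<Sum>n\<in>{floor_vec (x + y)}. indicator A (x + y - n) :: ennreal)"
  proof (rule nn_integral_count_space')
    fix n assume "n \<in> int_vecs" "n \<notin> {floor_vec (x + y)}"
    then have "x + y - n \<notin> A" using diff_in_unit_cube_iff[of n "x + y"] assms by blast
    then show "indicator A (x + y - n) = (0::ennreal)" by simp
  qed (auto simp: floor_vec_in_int_vecs)
  then show ?thesis by (simp add: torus_add_eq)
qed

section \<open>Fibre volumes\<close>

lemma kerR_subspace: "subspace (kerR L)"
  unfolding subspace_def kerR_def
  by (simp add: matrix_vector_right_distrib matrix_vector_mult_scaleR)

lemma onb_param_kerR: "L *v onb_param (kerR L) t = 0"
  using onb_param_in[OF kerR_subspace, of L t] by (simp add: kerR_def)

definition some_preimage :: "real^'m^'r \<Rightarrow> real^'r \<Rightarrow> real^'m" where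
  "some_preimage L k = (SOME y. L *v y = k)"

lemma matrix_vector_mult_some_preimage:
  fixes L :: "real^'m^'r"
  assumes "rank L = CARD('r)"
  shows "L *v some_preimage L k = k"
proof -
  have "surj ((*v) L)" using assms full_rank_surjective by blast
  then have "\<exists>y. L *v y = k" by (metis surjD)
  then show ?thesis unfolding some_preimage_def by (rule someI_ex)
qed

lemma nn_integral_kerR_fibre_cong:
  fixes L :: "real^'m^'r"
  assumes g[measurable]: "g \<in> borel_measurable borel" and "L *v a = L *v b"
  shows "(\<integral>\<^sup>+t. g (a + onb_param (kerR L) t) \<partial>onb_param_space (kerR L))
    = (\<integral>\<^sup>+t. g (b + onb_param (kerR L) t) \<partial>onb_param_space (kerR L))"
proof -
  have "a - b \<in> kerR L" using assms(2) by (simp add: kerR_def matrix_vector_mult_diff_distrib)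
  from nn_integral_onb_param_translate[OF kerR_subspace _ this, of "\<lambda>y. g (b + y)"]
  show ?thesis by (simp add: algebra_simps)
qed

text \<open>fibre_volume L A k is \<Lambda>_k(A) from the header, computed with the preimage some_preimage L k.\<close>

definition fibre_volume :: "real^'m^'r \<Rightarrow> (real^'m) set \<Rightarrow> real^'r \<Rightarrow> ennreal" where
  "fibre_volume L A k =
     (\<integral>\<^sup>+t. indicator A (some_preimage L k + onb_param (kerR L) t) \<partial>onb_param_space (kerR L))"

definition total_fibre_volume :: "real^'m^'r \<Rightarrow> (real^'m) set \<Rightarrow> ennreal" where
  "total_fibre_volume L A = (\<integral>\<^sup>+k. fibre_volume L A k \<partial>count_space int_vecs)"

lemma fibre_volume_eq_nn_integral:
  fixes L :: "real^'m^'r"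
  assumes "rank L = CARD('r)" "A \<in> sets borel"
  shows "fibre_volume L A (L *v z) = (\<integral>\<^sup>+t. indicator A (z + onb_param (kerR L) t) \<partial>onb_param_space (kerR L))"
  unfolding fibre_volume_def using assms
  by (intro nn_integral_kerR_fibre_cong) (simp_all add: matrix_vector_mult_some_preimage)

lemma emeasure_subspace_lebesgue_fibre:
  fixes L :: "real^'m^'r"
  assumes L_rank: "rank L = CARD('r)" and A[measurable]: "A \<in> sets borel"
  shows "emeasure (subspace_lebesgue (kerR L)) ((\<lambda>y. y - z) ` (A \<inter> (\<lambda>v. z + v) ` kerR L))
     = fibre_volume L A (L *v z)"
proof -
  define E where "E = (\<lambda>v. L *v v) -` {0} \<inter> (\<lambda>v. z + v) -` A"
  have fibre_eq: "(\<lambda>y. y - z) ` (A \<inter> (\<lambda>v. z + v) ` kerR L) = E"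
  proof (intro equalityI subsetI)
    fix v assume "v \<in> (\<lambda>y. y - z) ` (A \<inter> (\<lambda>v. z + v) ` kerR L)"
    then show "v \<in> E" by (auto simp: E_def kerR_def)
  next
    fix v assume "v \<in> E"
    then have "z + v \<in> A \<inter> (\<lambda>v. z + v) ` kerR L" by (auto simp: E_def kerR_def)
    then show "v \<in> (\<lambda>y. y - z) ` (A \<inter> (\<lambda>v. z + v) ` kerR L)" by (rule rev_image_eqI) simp
  qed
  have E_borel: "E \<in> sets borel" unfolding E_def by measurable
  have "emeasure (subspace_lebesgue (kerR L)) E
      = (\<integral>\<^sup>+y. indicator E y \<partial>distr (onb_param_space (kerR L)) borel (onb_param (kerR L)))"
    unfolding subspace_lebesgue_eq_distr_onb_param using E_borel by simp
  also have "\<dots> = (\<integral>\<^sup>+t. indicator E (onb_param (kerR L) t) \<partial>onb_param_space (kerR L))"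
    using E_borel by (intro nn_integral_distr) simp_all
  also have "\<dots> = (\<integral>\<^sup>+t. indicator A (z + onb_param (kerR L) t) \<partial>onb_param_space (kerR L))"
    by (intro nn_integral_cong) (simp add: E_def onb_param_kerR indicator_def)
  also have "\<dots> = fibre_volume L A (L *v z)"
    by (rule fibre_volume_eq_nn_integral[OF L_rank A, symmetric])
  finally show ?thesis unfolding fibre_eq .
qed

lemma fibre_volume_outside_image:
  fixes L :: "real^'m^'r"
  assumes L_rank: "rank L = CARD('r)" and "A \<subseteq> unit_cube" and k: "k \<notin> (\<lambda>x. L *v x) ` unit_cube"
  shows "fibre_volume L A k = 0"
proof -
  have "some_preimage L k + onb_param (kerR L) t \<notin> A" for t
  proof
    assume "some_preimage L k + onb_param (kerR L) t \<in> A"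
    then have "some_preimage L k + onb_param (kerR L) t \<in> unit_cube" using assms(2) by blast
    moreover have "L *v (some_preimage L k + onb_param (kerR L) t) = k"
      by (simp add: matrix_vector_right_distrib matrix_vector_mult_some_preimage[OF L_rank] onb_param_kerR)
    ultimately show False using k by (metis image_eqI)
  qed
  then show ?thesis unfolding fibre_volume_def by simp
qed

lemma total_fibre_volume_eq_sum:
  fixes L :: "real^'m^'r"
  assumes "rank L = CARD('r)" "A \<subseteq> unit_cube" "finite ((\<lambda>x. L *v x) ` unit_cube \<inter> int_vecs)"
  shows "total_fibre_volume L A = (\<Sum>k\<in>(\<lambda>x. L *v x) ` unit_cube \<inter> int_vecs. fibre_volume L A k)"
  unfolding total_fibre_volume_def
  by (rule nn_integral_count_space'[OF assms(3)]) (auto intro: fibre_volume_outside_image[OF assms(1,2)])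

lemma norm_le_card_unit_cube:
  assumes "y \<in> unit_cube"
  shows "norm (y :: real^'m) \<le> CARD('m)"
proof -
  have "norm y \<le> (\<Sum>i\<in>UNIV. \<bar>y$i\<bar>)" by (rule norm_le_l1_cart)
  also have "\<dots> \<le> (\<Sum>i\<in>(UNIV::'m set). 1)"
  proof (rule sum_mono)
    fix i
    have "0 \<le> y$i" "y$i < 1" using assms unfolding unit_cube_def by blast+
    then show "\<bar>y$i\<bar> \<le> 1" by simp
  qed
  finally show ?thesis by simp
qed

lemma fibre_volume_unit_cube_finite:
  fixes L :: "real^'m^'r"
  shows "fibre_volume L unit_cube k < \<infinity>"
proof -
  interpret product_sigma_finite "\<lambda>_::nat. lborel :: real measure" by unfold_locales
  define R where "R = norm (some_preimage L k) + CARD('m)"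
  define B where "B = Pi\<^sub>E {..<dim (kerR L)} (\<lambda>_. {-R..R})"
  have B_sets: "B \<in> sets (onb_param_space (kerR L))"
    unfolding B_def onb_param_space_def by (intro sets_PiM_I_finite) auto
  have cube_le_B: "indicator unit_cube (some_preimage L k + onb_param (kerR L) t) \<le> (indicator B t :: ennreal)"
    if t: "t \<in> space (onb_param_space (kerR L))" for t
  proof (cases "some_preimage L k + onb_param (kerR L) t \<in> unit_cube")
    case True
    have "norm (onb_param (kerR L) t)
        = norm ((some_preimage L k + onb_param (kerR L) t) - some_preimage L k)" by simp
    also have "\<dots> \<le> norm (some_preimage L k + onb_param (kerR L) t) + norm (some_preimage L k)"
      by (rule norm_triangle_ineq4)
    finally have "norm (onb_param (kerR L) t) \<le> R"
      using norm_le_card_unit_cube[OF True] unfolding R_def by simp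
    then have bound: "\<bar>t j\<bar> \<le> R" if "j < dim (kerR L)" for j
      using abs_le_norm_onb_param[OF kerR_subspace that] by (rule order.trans[rotated])
    have "t j \<in> {-R..R}" if "j < dim (kerR L)" for j
      using bound[OF that] by (simp add: abs_le_iff)
    moreover have "t \<in> extensional {..<dim (kerR L)}"
      using t by (simp add: onb_param_space_def space_PiM PiE_iff)
    ultimately have "t \<in> B" by (simp add: B_def PiE_iff)
    then show ?thesis using True by simp
  qed simp
  have "fibre_volume L unit_cube k \<le> (\<integral>\<^sup>+t. indicator B t \<partial>onb_param_space (kerR L))"
    unfolding fibre_volume_def by (intro nn_integral_mono cube_le_B)
  also have "\<dots> = emeasure (onb_param_space (kerR L)) B" using B_sets by simp
  also have "\<dots> = (\<Prod>i<dim (kerR L). emeasure lborel {-R..R})"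
    unfolding B_def onb_param_space_def by (subst emeasure_PiM) auto
  also have "\<dots> < \<infinity>" by (simp add: emeasure_lborel_Icc_eq power_less_top_ennreal)
  finally show ?thesis .
qed

lemma total_fibre_volume_unit_cube_finite:
  fixes L :: "real^'m^'r"
  assumes L_rank: "rank L = CARD('r)" and fin: "finite ((\<lambda>x. L *v x) ` unit_cube \<inter> int_vecs)"
  shows "total_fibre_volume L unit_cube < \<infinity>"
  unfolding total_fibre_volume_eq_sum[OF L_rank order.refl fin]
  using fin by (simp add: fibre_volume_unit_cube_finite[simplified])

lemma total_fibre_volume_unit_cube_nonzero:
  fixes L :: "real^'m^'r"
  assumes L_int: "\<forall>i j. L$i$j \<in> \<int>" and L_rank: "rank L = CARD('r)"
  shows "total_fibre_volume L unit_cube \<noteq> 0"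
proof
  assume total_zero: "total_fibre_volume L unit_cube = 0"
  have fibre_zero: "fibre_volume L unit_cube (L *v n) = 0" if "n \<in> int_vecs" for n
    using total_zero nn_integral_ge_point[of "L *v n" int_vecs "fibre_volume L unit_cube"]
      integer_matrix_vector_mult_int_vecs[OF L_int that]
    by (simp add: total_fibre_volume_def)
  have "(\<integral>\<^sup>+n. \<integral>\<^sup>+t. indicator unit_cube (n + onb_param (kerR L) t) \<partial>onb_param_space (kerR L) \<partial>count_space int_vecs)
      = (\<integral>\<^sup>+n. 0 \<partial>count_space (int_vecs :: (real^'m) set))"
    by (intro nn_integral_cong) (simp add: fibre_zero fibre_volume_eq_nn_integral[OF L_rank unit_cube_borel, symmetric])
  also have "\<dots> = 0" by simp
  finally have "(\<integral>\<^sup>+n. \<integral>\<^sup>+t. indicator unit_cube (n + onb_param (kerR L) t) \<partial>onb_param_space (kerR L) \<partial>count_space int_vecs) = 0" .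
  also have "(\<integral>\<^sup>+n. \<integral>\<^sup>+t. indicator unit_cube (n + onb_param (kerR L) t) \<partial>onb_param_space (kerR L) \<partial>count_space int_vecs)
      = (\<integral>\<^sup>+t. \<integral>\<^sup>+n. indicator unit_cube (onb_param (kerR L) t + n) \<partial>count_space int_vecs \<partial>onb_param_space (kerR L))"
    by (subst nn_integral_count_space_nn_integral[OF countable_int_vecs]) (simp_all add: add.commute)
  also have "\<dots> = emeasure (onb_param_space (kerR L)) (space (onb_param_space (kerR L)))"
    by (simp add: nn_integral_unit_cube_translates)
  finally show False using emeasure_onb_param_space_nonzero by blast
qed

section \<open>Invariance under torus translations\<close>

lemma fibre_volume_translate:
  fixes L :: "real^'m^'r"
  assumes L_rank: "rank L = CARD('r)" and S[measurable]: "S \<in> sets borel"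
  shows "fibre_volume L ((\<lambda>y. y + w) -` S) k = fibre_volume L S (k + L *v w)"
proof -
  have "fibre_volume L ((\<lambda>y. y + w) -` S) k
      = (\<integral>\<^sup>+t. indicator S ((some_preimage L k + w) + onb_param (kerR L) t) \<partial>onb_param_space (kerR L))"
    unfolding fibre_volume_def by (intro nn_integral_cong) (simp add: indicator_def algebra_simps)
  also have "\<dots> = fibre_volume L S (k + L *v w)"
    using fibre_volume_eq_nn_integral[OF L_rank S, of "some_preimage L k + w"]
    by (simp add: matrix_vector_right_distrib matrix_vector_mult_some_preimage[OF L_rank])
  finally show ?thesis .
qed

lemma total_fibre_volume_translate:
  fixes L :: "real^'m^'r"
  assumes L_rank: "rank L = CARD('r)" and S: "S \<in> sets borel" and w: "L *v w \<in> int_vecs"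
  shows "total_fibre_volume L ((\<lambda>y. y + w) -` S) = total_fibre_volume L S"
  unfolding total_fibre_volume_def fibre_volume_translate[OF L_rank S]
  by (rule nn_integral_bij_count_space[OF bij_betw_add_int_vecs[OF w]])

lemma nn_integral_count_space_total_fibre_volume:
  fixes L :: "real^'m^'r" and S :: "'i \<Rightarrow> (real^'m) set"
  assumes I: "countable I" and S[measurable]: "\<And>n. n \<in> I \<Longrightarrow> S n \<in> sets borel"
  shows "(\<integral>\<^sup>+n. total_fibre_volume L (S n) \<partial>count_space I)
    = (\<integral>\<^sup>+k. \<integral>\<^sup>+t. \<integral>\<^sup>+n. indicator (S n) (some_preimage L k + onb_param (kerR L) t) \<partial>count_space I
         \<partial>onb_param_space (kerR L) \<partial>count_space int_vecs)"
proof -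
  have "(\<integral>\<^sup>+n. total_fibre_volume L (S n) \<partial>count_space I)
      = (\<integral>\<^sup>+k. \<integral>\<^sup>+n. fibre_volume L (S n) k \<partial>count_space I \<partial>count_space int_vecs)"
    unfolding total_fibre_volume_def
    by (rule nn_integral_count_space_nn_integral[OF I, symmetric]) simp
  also have "\<dots> = (\<integral>\<^sup>+k. \<integral>\<^sup>+t. \<integral>\<^sup>+n. indicator (S n) (some_preimage L k + onb_param (kerR L) t)
      \<partial>count_space I \<partial>onb_param_space (kerR L) \<partial>count_space int_vecs)"
    unfolding fibre_volume_def
    by (intro nn_integral_cong nn_integral_count_space_nn_integral[OF I, symmetric]) measurable
  finally show ?thesis .
qed

lemma total_fibre_volume_torus_preimage:
  fixes L :: "real^'m^'r"
  assumes L_int: "\<forall>i j. L$i$j \<in> \<int>" and L_rank: "rank L = CARD('r)"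
    and A[measurable]: "A \<in> sets borel" and A_cube: "A \<subseteq> unit_cube"
    and x: "L *v x \<in> int_vecs"
  shows "total_fibre_volume L {y \<in> unit_cube. torus_add x y \<in> A} = total_fibre_volume L A"
proof -
  define S where "S n = {y \<in> unit_cube. x + y - n \<in> A}" for n
  define T where "T n = {z \<in> A. z - x + n \<in> unit_cube}" for n
  have S_borel: "S n \<in> sets borel" and T_borel: "T n \<in> sets borel" for n
    unfolding S_def T_def by measurable
  have S_sum: "(\<integral>\<^sup>+n. indicator (S n) y \<partial>count_space int_vecs) = indicator {y \<in> unit_cube. torus_add x y \<in> A} y" for y
  proof -
    have "(\<integral>\<^sup>+n. indicator (S n) y \<partial>count_space int_vecs)
        = (\<integral>\<^sup>+n. indicator unit_cube y * indicator A (x + y - n) \<partial>count_space int_vecs)"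
      by (intro nn_integral_cong) (simp add: S_def split: split_indicator)
    also have "\<dots> = indicator unit_cube y * (\<integral>\<^sup>+n. indicator A (x + y - n) \<partial>count_space int_vecs)"
      by (rule nn_integral_cmult) simp
    finally show ?thesis
      by (simp add: indicator_torus_add_eq_nn_integral[OF A_cube, symmetric] split: split_indicator)
  qed
  have T_sum: "(\<integral>\<^sup>+n. indicator (T n) z \<partial>count_space int_vecs) = (indicator A z :: ennreal)" for z
  proof -
    have "(\<integral>\<^sup>+n. indicator (T n) z \<partial>count_space int_vecs)
        = (\<integral>\<^sup>+n. indicator unit_cube (z - x + n) * indicator A z \<partial>count_space int_vecs)"
      by (intro nn_integral_cong) (simp add: T_def split: split_indicator)
    also have "\<dots> = (\<integral>\<^sup>+n. indicator unit_cube (z - x + n) \<partial>count_space int_vecs) * indicator A z"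
      by (rule nn_integral_multc) simp
    finally show ?thesis by (simp only: nn_integral_unit_cube_translates mult_1)
  qed
  have "total_fibre_volume L {y \<in> unit_cube. torus_add x y \<in> A}
      = (\<integral>\<^sup>+n. total_fibre_volume L (S n) \<partial>count_space int_vecs)"
    unfolding nn_integral_count_space_total_fibre_volume[OF countable_int_vecs S_borel] S_sum
    unfolding total_fibre_volume_def fibre_volume_def ..
  also have "\<dots> = (\<integral>\<^sup>+n. total_fibre_volume L (T n) \<partial>count_space int_vecs)"
  proof (rule nn_integral_cong)
    fix n assume "n \<in> space (count_space (int_vecs :: (real^'m) set))"
    then have "L *v n \<in> int_vecs" using integer_matrix_vector_mult_int_vecs[OF L_int] by simp
    then have "L *v (x - n) \<in> int_vecs" using x by (simp add: matrix_vector_mult_diff_distrib int_vecs_diff)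
    moreover have "S n = (\<lambda>y. y + (x - n)) -` T n" by (auto simp: S_def T_def algebra_simps)
    ultimately show "total_fibre_volume L (S n) = total_fibre_volume L (T n)"
      using total_fibre_volume_translate[OF L_rank T_borel] by simp
  qed
  also have "\<dots> = total_fibre_volume L A"
    unfolding nn_integral_count_space_total_fibre_volume[OF countable_int_vecs T_borel] T_sum
    unfolding total_fibre_volume_def fibre_volume_def ..
  finally show ?thesis .
qed

lemma emeasure_haar_kerT_torus_preimage:
  fixes L :: "real^'m^'r"
  assumes L_int: "\<forall>i j. L$i$j \<in> \<int>" and haar: "haar_kerT L \<mu>"
    and y: "y \<in> kerT L" and A: "A \<in> sets borel" and A_ker: "A \<subseteq> kerT L"
  shows "emeasure \<mu> {x \<in> kerT L. torus_add x y \<in> A} = emeasure \<mu> A"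
proof -
  define S where "S = {x \<in> kerT L. torus_add x y \<in> A}"
  have sets_\<mu>: "sets \<mu> = sets (restrict_space borel (kerT L))" using haar by (simp add: haar_kerT_def)
  have "(\<lambda>x. torus_add x y) -` A \<in> sets borel"
    by (rule measurable_sets_borel[OF _ A]) measurable
  moreover have "S = kerT L \<inter> (\<lambda>x. torus_add x y) -` A" unfolding S_def by auto
  ultimately have S: "S \<in> sets \<mu>" unfolding sets_\<mu> sets_restrict_space by blast
  have "torus_add y ` S = A"
  proof
    show "torus_add y ` S \<subseteq> A"
    proof
      fix z assume "z \<in> torus_add y ` S"
      then obtain b where "b \<in> S" "z = torus_add y b" by blast
      then show "z \<in> A" unfolding S_def using torus_add_commute[of y b] by simp
    qed
  next
    show "A \<subseteq> torus_add y ` S"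
    proof
      fix a assume a: "a \<in> A"
      define m where "m = floor_vec (a - y)"
      define b where "b = torus_add (- y) a"
      have b_eq: "b = (a - y) - m" unfolding b_def m_def torus_add_eq by simp
      have "b \<in> unit_cube" unfolding b_eq m_def using diff_in_unit_cube_iff[OF floor_vec_in_int_vecs] by blast
      moreover have "L *v b \<in> int_vecs"
      proof -
        have "L *v a \<in> int_vecs" "L *v y \<in> int_vecs" using a A_ker y by (auto simp: kerT_def)
        moreover have "L *v m \<in> int_vecs"
          unfolding m_def by (rule integer_matrix_vector_mult_int_vecs[OF L_int floor_vec_in_int_vecs])
        ultimately show ?thesis unfolding b_eq by (simp add: matrix_vector_mult_diff_distrib int_vecs_diff)
      qed
      ultimately have b_ker: "b \<in> kerT L" by (simp add: kerT_def)
      have "(a - m) - (- m) \<in> unit_cube" using a A_ker by (auto simp: kerT_def)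
      then have floor_eq: "- m = floor_vec (a - m)"
        using diff_in_unit_cube_iff[OF int_vecs_uminus[OF floor_vec_in_int_vecs]] unfolding m_def by blast
      have "y + b = a - m" unfolding b_eq by simp
      then have b_a: "torus_add y b = a" unfolding torus_add_eq using floor_eq[symmetric] by simp
      then have "b \<in> S" unfolding S_def using a b_ker torus_add_commute[of b y] by simp
      then show "a \<in> torus_add y ` S" using b_a by blast
    qed
  qed
  moreover have "emeasure \<mu> (torus_add y ` S) = emeasure \<mu> S"
    using haar y S by (simp add: haar_kerT_def)
  ultimately show ?thesis unfolding S_def by simp
qed

lemma nn_integral_haar_kerT_torus_translate:
  fixes L :: "real^'m^'r"
  assumes L_int: "\<forall>i j. L$i$j \<in> \<int>" and haar: "haar_kerT L \<mu>"
    and y: "y \<in> kerT L" and A[measurable]: "A \<in> sets borel" and A_ker: "A \<subseteq> kerT L"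
  shows "(\<integral>\<^sup>+x. indicator A (torus_add x y) \<partial>\<mu>) = emeasure \<mu> A"
proof -
  have space_\<mu>: "space \<mu> = kerT L" and sets_\<mu>: "sets \<mu> = sets (restrict_space borel (kerT L))"
    using haar by (auto simp: haar_kerT_def)
  have "{x \<in> kerT L. torus_add x y \<in> A} = kerT L \<inter> (\<lambda>x. torus_add x y) -` A" by auto
  moreover have "(\<lambda>x. torus_add x y) -` A \<in> sets borel" by (rule measurable_sets_borel[OF _ A]) measurable
  ultimately have preimage_sets: "{x \<in> kerT L. torus_add x y \<in> A} \<in> sets \<mu>"
    unfolding sets_\<mu> sets_restrict_space by auto
  have "(\<integral>\<^sup>+x. indicator A (torus_add x y) \<partial>\<mu>) = (\<integral>\<^sup>+x. indicator {x \<in> kerT L. torus_add x y \<in> A} x \<partial>\<mu>)"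
    using space_\<mu> by (intro nn_integral_cong) (auto simp: indicator_def)
  also have "\<dots> = emeasure \<mu> {x \<in> kerT L. torus_add x y \<in> A}"
    using preimage_sets by simp
  also have "\<dots> = emeasure \<mu> A"
    by (rule emeasure_haar_kerT_torus_preimage[OF L_int haar y A A_ker])
  finally show ?thesis .
qed

lemma total_fibre_volume_haar:
  fixes L :: "real^'m^'r"
  assumes L_int: "\<forall>i j. L$i$j \<in> \<int>" and L_rank: "rank L = CARD('r)"
    and haar: "haar_kerT L \<mu>" and A[measurable]: "A \<in> sets borel" and A_ker: "A \<subseteq> kerT L"
  shows "total_fibre_volume L A = emeasure \<mu> A * total_fibre_volume L unit_cube"
proof -
  let ?Z = "int_vecs :: (real^'r) set" and ?P = "onb_param_space (kerR L)"
  have prob: "prob_space \<mu>" and space_\<mu>: "space \<mu> = kerT L"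
    and sets_\<mu>: "sets \<mu> = sets (restrict_space borel (kerT L))"
    using haar by (auto simp: haar_kerT_def)
  interpret prob_space \<mu> by (rule prob)
  interpret P: sigma_finite_measure ?P by (rule sigma_finite_onb_param_space)
  interpret pair_sigma_finite \<mu> ?P by unfold_locales
  have A_cube: "A \<subseteq> unit_cube" using A_ker by (auto simp: kerT_def)
  define y where "y k t = some_preimage L k + onb_param (kerR L) t" for k t
  define G where "G k x t = indicator unit_cube (y k t) * (indicator A (torus_add x (y k t)) :: ennreal)" for k x t
  have G_measurable: "case_prod (G k) \<in> borel_measurable (\<mu> \<Otimes>\<^sub>M ?P)" for k
  proof -
    have "fst \<in> restrict_space borel (kerT L) \<Otimes>\<^sub>M ?P \<rightarrow>\<^sub>M borel"
      using measurable_compose[OF measurable_fst measurable_restrict_space1[OF measurable_ident_sets[OF refl]]]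
      by blast
    then have "(\<lambda>p. G k (fst p) (snd p)) \<in> borel_measurable (restrict_space borel (kerT L) \<Otimes>\<^sub>M ?P)"
      unfolding G_def y_def by measurable
    moreover have "(\<mu> \<Otimes>\<^sub>M ?P) \<rightarrow>\<^sub>M (borel :: ennreal measure) = (restrict_space borel (kerT L) \<Otimes>\<^sub>M ?P) \<rightarrow>\<^sub>M borel"
      by (rule measurable_cong_sets) (simp_all add: sets_pair_measure_cong[OF sets_\<mu> refl])
    ultimately show ?thesis by (simp add: case_prod_beta')
  qed
  have "total_fibre_volume L A = (\<integral>\<^sup>+x. \<integral>\<^sup>+k. \<integral>\<^sup>+t. G k x t \<partial>?P \<partial>count_space ?Z \<partial>\<mu>)"
  proof -
    have "total_fibre_volume L A = (\<integral>\<^sup>+k. \<integral>\<^sup>+t. G k x t \<partial>?P \<partial>count_space ?Z)" if "x \<in> kerT L" for x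
    proof -
      have "L *v x \<in> int_vecs" using that by (simp add: kerT_def)
      note preimage = total_fibre_volume_torus_preimage[OF L_int L_rank A A_cube this]
      have indicator_preimage: "indicator {z \<in> unit_cube. torus_add x z \<in> A} z
          = indicator unit_cube z * (indicator A (torus_add x z) :: ennreal)" for z
        by (simp split: split_indicator)
      show ?thesis
        using preimage unfolding total_fibre_volume_def fibre_volume_def indicator_preimage G_def y_def
        by (rule sym)
    qed
    then have "(\<integral>\<^sup>+x. total_fibre_volume L A \<partial>\<mu>) = (\<integral>\<^sup>+x. \<integral>\<^sup>+k. \<integral>\<^sup>+t. G k x t \<partial>?P \<partial>count_space ?Z \<partial>\<mu>)"
      by (intro nn_integral_cong) (simp add: space_\<mu>)
    then show ?thesis by (simp add: emeasure_space_1)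
  qed
  also have "\<dots> = (\<integral>\<^sup>+k. \<integral>\<^sup>+x. \<integral>\<^sup>+t. G k x t \<partial>?P \<partial>\<mu> \<partial>count_space ?Z)"
    by (intro nn_integral_count_space_nn_integral countable_int_vecs G_measurable
        sigma_finite_measure.borel_measurable_nn_integral[OF sigma_finite_onb_param_space])
  also have "\<dots> = (\<integral>\<^sup>+k. \<integral>\<^sup>+t. \<integral>\<^sup>+x. G k x t \<partial>\<mu> \<partial>?P \<partial>count_space ?Z)"
    by (intro nn_integral_cong Fubini'[symmetric] G_measurable)
  also have "\<dots> = (\<integral>\<^sup>+k. \<integral>\<^sup>+t. indicator unit_cube (y k t) * emeasure \<mu> A \<partial>?P \<partial>count_space ?Z)"
  proof (intro nn_integral_cong)
    fix k t assume "k \<in> space (count_space ?Z)"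
    then have L_y: "L *v y k t \<in> int_vecs"
      by (simp add: y_def matrix_vector_right_distrib matrix_vector_mult_some_preimage[OF L_rank] onb_param_kerR)
    show "(\<integral>\<^sup>+x. G k x t \<partial>\<mu>) = indicator unit_cube (y k t) * emeasure \<mu> A"
    proof (cases "y k t \<in> unit_cube")
      case True
      then have "y k t \<in> kerT L" using L_y by (simp add: kerT_def)
      then show ?thesis
        using True nn_integral_haar_kerT_torus_translate[OF L_int haar _ A A_ker] by (simp add: G_def)
    qed (simp add: G_def)
  qed
  also have "\<dots> = (\<integral>\<^sup>+k. fibre_volume L unit_cube k * emeasure \<mu> A \<partial>count_space ?Z)"
    unfolding fibre_volume_def y_def by (intro nn_integral_cong nn_integral_multc) measurable
  also have "\<dots> = total_fibre_volume L unit_cube * emeasure \<mu> A"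
    unfolding total_fibre_volume_def by (rule nn_integral_multc) simp
  finally show ?thesis by (simp add: mult.commute)
qed


lemma sum_fibre_measures_eq_total_fibre_volume:
  fixes L :: "real^'m^'r" and M :: nat
  assumes L_rank: "rank L = CARD('r)"
    and bij: "bij_betw (\<lambda>i. L *v xs i) {1..M} ((\<lambda>x. L *v x) ` unit_cube \<inter> int_vecs)"
    and A: "A \<in> sets borel" and A_cube: "A \<subseteq> unit_cube"
  shows "(\<Sum>i\<in>{1..M}. emeasure (subspace_lebesgue (kerR L)) ((\<lambda>y. y - xs i) ` (A \<inter> (\<lambda>v. xs i + v) ` kerR L)))
    = total_fibre_volume L A"
proof -
  have "finite ((\<lambda>x. L *v x) ` unit_cube \<inter> int_vecs)" using bij_betw_finite[OF bij] by simp
  moreover have "(\<Sum>i\<in>{1..M}. emeasure (subspace_lebesgue (kerR L)) ((\<lambda>y. y - xs i) ` (A \<inter> (\<lambda>v. xs i + v) ` kerR L)))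
      = (\<Sum>k\<in>(\<lambda>x. L *v x) ` unit_cube \<inter> int_vecs. fibre_volume L A k)"
    unfolding emeasure_subspace_lebesgue_fibre[OF L_rank A] by (rule sum.reindex_bij_betw[OF bij])
  ultimately show ?thesis using total_fibre_volume_eq_sum[OF L_rank A_cube] by simp
qed

theorem lemma3p3:
  fixes L :: "real^'m^'r" and \<mu>T :: "(real^'m) measure"
  assumes L_int: "\<forall>i j. L$i$j \<in> \<int>"
    and L_rank: "rank L = CARD('r)"
    and haar: "haar_kerT L \<mu>T"
  shows "\<exists>c::real. c > 0 \<and>
    (\<forall>(M::nat) (xs :: nat \<Rightarrow> real^'m).
       (\<forall>i\<in>{1..M}. xs i \<in> unit_cube) \<and>
       bij_betw (\<lambda>i. L *v xs i) {1..M} ((\<lambda>x. L *v x) ` unit_cube \<inter> int_vecs) \<longrightarrow>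
       (\<forall>A. A \<in> sets borel \<and> A \<subseteq> kerT L \<longrightarrow>
          emeasure \<mu>T A =
            ennreal c * (\<Sum>i\<in>{1..M}.
               emeasure (subspace_lebesgue (kerR L))
                 ((\<lambda>y. y - xs i) ` (A \<inter> (\<lambda>v. xs i + v) ` kerR L)))))"
proof -
  define N where "N = total_fibre_volume L unit_cube"
  (* If N = \<infinity> then L([0,1)^m) \<inter> \<int>^r is infinite, so no admissible xs exists. *)
  define c where "c = (if N = \<infinity> then 1 else 1 / enn2real N)"
  have N_pos: "N \<noteq> 0" unfolding N_def by (rule total_fibre_volume_unit_cube_nonzero[OF L_int L_rank])
  have "c > 0"
    using N_pos by (auto simp: c_def enn2real_positive_iff top.not_eq_extremum zero_less_iff_neq_zero)
  moreover have "emeasure \<mu>T A = ennreal c * (\<Sum>i\<in>{1..M}.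
      emeasure (subspace_lebesgue (kerR L)) ((\<lambda>y. y - xs i) ` (A \<inter> (\<lambda>v. xs i + v) ` kerR L)))"
    if bij: "bij_betw (\<lambda>i. L *v xs i) {1..M} ((\<lambda>x. L *v x) ` unit_cube \<inter> int_vecs)"
      and A: "A \<in> sets borel" "A \<subseteq> kerT L" for M :: nat and xs A
  proof -
    have A_cube: "A \<subseteq> unit_cube" using A(2) by (auto simp: kerT_def)
    have fin: "finite ((\<lambda>x. L *v x) ` unit_cube \<inter> int_vecs)" using bij_betw_finite[OF bij] by simp
    have "N < \<infinity>" unfolding N_def by (rule total_fibre_volume_unit_cube_finite[OF L_rank fin])
    define n where "n = enn2real N"
    have N_eq: "N = ennreal n" using \<open>N < \<infinity>\<close> unfolding n_def by simp
    have n_pos: "n > 0"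
      using \<open>N < \<infinity>\<close> N_pos unfolding n_def by (simp add: enn2real_positive_iff zero_less_iff_neq_zero)
    have c_eq: "c = 1 / n" using \<open>N < \<infinity>\<close> unfolding c_def n_def by simp
    have "(\<Sum>i\<in>{1..M}. emeasure (subspace_lebesgue (kerR L)) ((\<lambda>y. y - xs i) ` (A \<inter> (\<lambda>v. xs i + v) ` kerR L)))
        = emeasure \<mu>T A * ennreal n"
      unfolding sum_fibre_measures_eq_total_fibre_volume[OF L_rank bij A(1) A_cube]
        total_fibre_volume_haar[OF L_int L_rank haar A] N_def[symmetric] N_eq ..
    moreover have "ennreal c * ennreal n = 1"
      using n_pos unfolding c_eq by (simp add: ennreal_mult[symmetric])
    moreover have "ennreal c * (emeasure \<mu>T A * ennreal n) = emeasure \<mu>T A * (ennreal c * ennreal n)"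
      by (rule mult.left_commute)
    ultimately show ?thesis by simp
  qed
  ultimately show ?thesis by blast
qed

end
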